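(* Assume $\delta=0$ (only direct learning). For all sufficiently large $n$ there exists a symmetric investment equilibrium, and along any sequence of symmetric investment equilibria $(p^*,q^* )$, $$\lim_{n\to\infty}\iota(q^*,q^* )\,n^{1/k}=(k-1)^{1/k}.$$
   Context: Model (for each number of firms $n\ge 2$). There are $n$ firms $1,\dots,n$; firm $i$ can discover a single idea, also labelled $i$. Fixed parameters (independent of $n$): an integer complexity $k\ge 2$, an indirect-learning probability $\delta\in[0,1]$, and a cost function $c:[0,1)\to[0,\infty)$ that is continuously differentiable, increasing and convex with $c(0)=0$ and $c(p)\to\infty$ as $p\to1^-$. Each firm $i$ chooses $(p_i,q_i)\in[0,1)\times[0,1]$. Idea $i$ is discovered independently with probability $p_i$; $I$ is the random set of discovered ideas. The interaction rate is $\iota(q_i,q_j)=q_iq_j$. For each ordered pair $i\neq j$, independently, $i$ learns directly from $j$ with probability $\iota(q_i,q_j)$, and conditional on this, independently with probability $\delta$, $i$ also learns indirectly through $j$. The indirect-learning network has an edge $j\to i$ whenever $i$ learns indirectly through $j$. $I_i(\mathbf p,\mathbf q)=\{j\in I\setminus\{i\}:$ some firm $m$, with $m=i$ or with a directed path from $m$ to $i$ in the indirect-learning network, learns directly from $j\}$ (when $\delta=0$ this is just the set of discovered ideas $j$ such that $i$ learns directly from $j$). A technology is a $k$-element subset $t\subseteq I$; firm $j$ knows $t$ if $t\subseteq\{j\}\cup I_j$. $PT_i$ is the set of technologies $t$ with $i\in t$ known by $i$ and by no other firm. Payoff $U_i=\mathbb E|PT_i|-c(p_i)$. An equilibrium is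 a pure-strategy Nash equilibrium; symmetric if all firms choose the same action; investment if all $p_i>0$. Sequences are indexed by $n\to\infty$. *)

theory Defs
  imports "HOL-Analysis.Analysis"
begin

text \<open>Firms and ideas are indexed by 0..<n. A strategy profile is a pair of
functions p q :: nat => real (only values below n matter).\<close>

definition iota :: "real \<Rightarrow> real \<Rightarrow> real" where
  "iota a b = a * b"

definition offdiag :: "nat \<Rightarrow> (nat \<times> nat) set" where
  "offdiag n = {(i,j). i < n \<and> j < n \<and> i \<noteq> j}"

text \<open>A realisation: D = discovered ideas; L = set of ordered pairs (i,j) such that
i learns directly from j; M \<subseteq> L = pairs (i,j) such that i also learns indirectly
through j.\<close>

definition indirect_net :: "(nat \<times> nat) set \<Rightarrow> (nat \<times> nat) set" where
  "indirect_net M = {(j,i). (i,j) \<in> M}"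

definition learned :: "nat set \<Rightarrow> (nat \<times> nat) set \<Rightarrow> (nat \<times> nat) set \<Rightarrow> nat \<Rightarrow> nat set" where
  "learned D L M i = {j \<in> D - {i}. \<exists>m. (m = i \<or> (m, i) \<in> trancl (indirect_net M)) \<and> (m, j) \<in> L}"

definition knows :: "nat set \<Rightarrow> (nat \<times> nat) set \<Rightarrow> (nat \<times> nat) set \<Rightarrow> nat \<Rightarrow> nat set \<Rightarrow> bool" where
  "knows D L M j t \<longleftrightarrow> t \<subseteq> insert j (learned D L M j)"

definition PT :: "nat \<Rightarrow> nat \<Rightarrow> nat set \<Rightarrow> (nat \<times> nat) set \<Rightarrow> (nat \<times> nat) set \<Rightarrow> nat \<Rightarrow> nat set set" where
  "PT n k D L M i = {t. t \<subseteq> D \<and> card t = k \<and> i \<in> t \<and> knows D L M i t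
      \<and> (\<forall>j<n. j \<noteq> i \<longrightarrow> \<not> knows D L M j t)}"

text \<open>Probability of a realisation (D, L, M) under profile (p, q) and indirect-learning
probability delta; all events are independent.\<close>

definition weight :: "nat \<Rightarrow> real \<Rightarrow> (nat \<Rightarrow> real) \<Rightarrow> (nat \<Rightarrow> real) \<Rightarrow>
    nat set \<Rightarrow> (nat \<times> nat) set \<Rightarrow> (nat \<times> nat) set \<Rightarrow> real" where
  "weight n \<delta> p q D L M =
     (\<Prod>j<n. if j \<in> D then p j else 1 - p j) *
     (\<Prod>(i,j)\<in>offdiag n.
        if (i,j) \<notin> L then 1 - iota (q i) (q j)
        else if (i,j) \<in> M then iota (q i) (q j) * \<delta>
        else iota (q i) (q j) * (1 - \<delta>))"

definition expected_PT :: "nat \<Rightarrow> nat \<Rightarrow> real \<Rightarrow> (nat \<Rightarrow> real) \<Rightarrow> (nat \<Rightarrow> real) \<Rightarrow> nat \<Rightarrow> real" where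
  "expected_PT n k \<delta> p q i =
     (\<Sum>D\<in>Pow {..<n}. \<Sum>L\<in>Pow (offdiag n). \<Sum>M\<in>Pow L.
        weight n \<delta> p q D L M * real (card (PT n k D L M i)))"

definition payoff :: "nat \<Rightarrow> nat \<Rightarrow> real \<Rightarrow> (real \<Rightarrow> real) \<Rightarrow> (nat \<Rightarrow> real) \<Rightarrow> (nat \<Rightarrow> real) \<Rightarrow> nat \<Rightarrow> real" where
  "payoff n k \<delta> c p q i = expected_PT n k \<delta> p q i - c (p i)"

definition admissible :: "real \<Rightarrow> real \<Rightarrow> bool" where
  "admissible a b \<longleftrightarrow> 0 \<le> a \<and> a < 1 \<and> 0 \<le> b \<and> b \<le> 1"

definition nash_eq :: "nat \<Rightarrow> nat \<Rightarrow> real \<Rightarrow> (real \<Rightarrow> real) \<Rightarrow> (nat \<Rightarrow> real) \<Rightarrow> (nat \<Rightarrow> real) \<Rightarrow> bool" where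
  "nash_eq n k \<delta> c p q \<longleftrightarrow>
     (\<forall>i<n. admissible (p i) (q i)) \<and>
     (\<forall>i<n. \<forall>a b. admissible a b \<longrightarrow>
        payoff n k \<delta> c (p(i := a)) (q(i := b)) i \<le> payoff n k \<delta> c p q i)"

definition sym_inv_eq :: "nat \<Rightarrow> real \<Rightarrow> (real \<Rightarrow> real) \<Rightarrow> nat \<Rightarrow> real \<Rightarrow> real \<Rightarrow> bool" where
  "sym_inv_eq k \<delta> c n ps qs \<longleftrightarrow> 0 < ps \<and> nash_eq n k \<delta> c (\<lambda>_. ps) (\<lambda>_. qs)"

definition cost_ok :: "(real \<Rightarrow> real) \<Rightarrow> bool" where
  "cost_ok c \<longleftrightarrow>
     (\<exists>c'. (\<forall>x\<in>{0..<1}. (c has_real_derivative c' x) (at x within {0..<1}))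
           \<and> continuous_on {0..<1} c')
     \<and> strict_mono_on {0..<1} c
     \<and> convex_on {0..<1} c
     \<and> c 0 = 0
     \<and> filterlim c at_top (at_left 1)"

end

theory Submission
  imports Defs "HOL-Real_Asymp.Real_Asymp"
begin

text \<open>Without indirect learning a technology t containing i is private to i exactly when i
learns directly from every other member of t, and no other firm m learns directly from all of
t - {m}. These events concern disjoint sets of links, so E|PT_i| is a sum of products. If all
other firms play (p, q) and i deviates to (a, b), it equals
C(n-1,k-1) a p^(k-1) G(b) with G = private_prob n k q.

Relative to G(q), G(b) is a product of powers of affine factors that equal 1 at b = q. The
estimate x^m \<le> exp (m (x - 1)) then shows that b = q maximises G as soon as the logarithmic
derivative of G vanishes at q, i.e. at a root of the polynomial interaction_foc n k;
conversely an equilibrium interaction rate is an interior maximum of G and solves that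
equation. Given such a root q, by convexity of the cost investment p is a best response as soon as
c'(p) = p^(k-1) C(n-1,k-1) G(q), which is solvable once C(n-1,k-1) G(q) is large; and it grows
without bound because n q^2 \<rightarrow> \<infinity>. Finally the equation forces (q^2)^(k-1) < 1/2 and
(q^2)^k = O(1/n), hence n (q^2)^k \<rightarrow> k - 1.\<close>

subsection \<open>Sums over independent Bernoulli outcomes\<close>

lemma sum_Pow_Un_mult:
  fixes f g :: "'a set \<Rightarrow> 'b::comm_semiring_1"
  assumes "finite A" "finite B" "A \<inter> B = {}"
  shows "(\<Sum>L\<in>Pow (A \<union> B). f (L \<inter> A) * g (L \<inter> B)) = (\<Sum>X\<in>Pow A. f X) * (\<Sum>Y\<in>Pow B. g Y)"
proof -
  have "(\<Sum>X\<in>Pow A. f X) * (\<Sum>Y\<in>Pow B. g Y) = (\<Sum>(X,Y)\<in>Pow A \<times> Pow B. f X * g Y)"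
    by (simp add: sum_product sum.cartesian_product)
  also have "\<dots> = (\<Sum>L\<in>Pow (A \<union> B). f (L \<inter> A) * g (L \<inter> B))"
    by (rule sum.reindex_bij_witness[where i="\<lambda>L. (L \<inter> A, L \<inter> B)" and j="\<lambda>(X,Y). X \<union> Y"])
      (use assms(3) in \<open>auto simp: Int_Un_distrib2 Int_absorb2 Int_absorb1 Int_commute
        intro!: arg_cong2[where f="(*)"] arg_cong[where f=f] arg_cong[where f=g]\<close>)
  finally show ?thesis by simp
qed

lemma sum_Pow_UN_prod:
  fixes H :: "'i \<Rightarrow> 'a set \<Rightarrow> 'b::comm_semiring_1"
  assumes "finite I" "\<And>i. i \<in> I \<Longrightarrow> finite (G i)" "disjoint_family_on G I"
  shows "(\<Sum>L\<in>Pow (\<Union>i\<in>I. G i). \<Prod>i\<in>I. H i (L \<inter> G i)) = (\<Prod>i\<in>I. \<Sum>B\<in>Pow (G i). H i B)"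
  using assms
proof (induction I rule: finite_induct)
  case (insert x F)
  let ?U = "\<Union>i\<in>F. G i"
  have disj: "G x \<inter> ?U = {}"
    using insert.prems(2) insert.hyps(2) unfolding disjoint_family_on_def by fastforce
  have "(\<Prod>i\<in>insert x F. H i (L \<inter> G i)) = H x (L \<inter> G x) * (\<Prod>i\<in>F. H i (L \<inter> ?U \<inter> G i))" for L
  proof -
    have "L \<inter> ?U \<inter> G i = L \<inter> G i" if "i \<in> F" for i using that by blast
    then have "(\<Prod>i\<in>F. H i (L \<inter> ?U \<inter> G i)) = (\<Prod>i\<in>F. H i (L \<inter> G i))"
      by (intro prod.cong) auto
    then show ?thesis using insert.hyps by simp
  qed
  then have "(\<Sum>L\<in>Pow (\<Union>i\<in>insert x F. G i). \<Prod>i\<in>insert x F. H i (L \<inter> G i))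
        = (\<Sum>X\<in>Pow (G x). H x X) * (\<Sum>Y\<in>Pow ?U. \<Prod>i\<in>F. H i (Y \<inter> G i))"
    using sum_Pow_Un_mult[of "G x" ?U "H x" "\<lambda>Y. \<Prod>i\<in>F. H i (Y \<inter> G i)"] disj insert.prems(1) insert.hyps(1)
    by simp
  also have "(\<Sum>Y\<in>Pow ?U. \<Prod>i\<in>F. H i (Y \<inter> G i)) = (\<Prod>i\<in>F. \<Sum>B\<in>Pow (G i). H i B)"
    using insert.prems disjoint_family_on_mono[of F "insert x F" G] by (intro insert.IH) auto
  finally show ?case using insert.hyps by simp
qed simp

lemma sum_Pow_prod_bool:
  fixes h :: "'a \<Rightarrow> bool \<Rightarrow> 'b::comm_semiring_1"
  assumes "finite S"
  shows "(\<Sum>B\<in>Pow S. \<Prod>s\<in>S. h s (s \<in> B)) = (\<Prod>s\<in>S. h s True + h s False)"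
proof -
  have "(\<Sum>B\<in>Pow (\<Union>s\<in>S. {s}). \<Prod>s\<in>S. h s (s \<in> B \<inter> {s})) = (\<Prod>s\<in>S. \<Sum>X\<in>Pow {s}. h s (s \<in> X))"
    by (rule sum_Pow_UN_prod) (use assms in \<open>auto simp: disjoint_family_on_def\<close>)
  moreover have "Pow {s} = {{}, {s}}" for s :: 'a by blast
  ultimately show ?thesis by (simp add: add.commute)
qed

lemma prod_of_bool: "finite A \<Longrightarrow> (\<Prod>a\<in>A. (of_bool (P a) :: 'b::comm_semiring_1)) = of_bool (\<forall>a\<in>A. P a)"
  by (induction A rule: finite_induct) auto

definition bern :: "real \<Rightarrow> bool \<Rightarrow> real" where
  "bern x b = (if b then x else 1 - x)"

lemma sum_Pow_bern:
  "finite S \<Longrightarrow> (\<Sum>B\<in>Pow S. \<Prod>s\<in>S. bern (x s) (s \<in> B)) = 1"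
  using sum_Pow_prod_bool[of S "\<lambda>s. bern (x s)"] by (simp add: bern_def)

lemma sum_Pow_bern_blocks:
  fixes x :: "'a \<Rightarrow> real" and H :: "'i \<Rightarrow> 'a set \<Rightarrow> real"
  assumes A: "finite A" and I: "finite I" and disj: "disjoint_family_on G I"
    and G: "\<And>i. i \<in> I \<Longrightarrow> G i \<subseteq> A"
  shows "(\<Sum>L\<in>Pow A. (\<Prod>s\<in>A. bern (x s) (s \<in> L)) * (\<Prod>i\<in>I. H i (L \<inter> G i)))
       = (\<Prod>i\<in>I. \<Sum>B\<in>Pow (G i). (\<Prod>s\<in>G i. bern (x s) (s \<in> B)) * H i B)"
proof -
  define U where "U = (\<Union>i\<in>I. G i)"
  have finG: "finite (G i)" if "i \<in> I" for i using G[OF that] A by (rule finite_subset)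
  have finU: "finite U" and UA: "U \<subseteq> A" using I finG G unfolding U_def by auto
  define f where "f X = (\<Prod>s\<in>A - U. bern (x s) (s \<in> X))" for X
  define g where "g i B = (\<Prod>s\<in>G i. bern (x s) (s \<in> B)) * H i B" for i B
  have split: "(\<Prod>s\<in>A. bern (x s) (s \<in> L)) * (\<Prod>i\<in>I. H i (L \<inter> G i))
      = f (L \<inter> (A - U)) * (\<Prod>i\<in>I. g i (L \<inter> U \<inter> G i))" for L
  proof -
    have "(\<Prod>s\<in>A. bern (x s) (s \<in> L)) = f (L \<inter> (A - U)) * (\<Prod>s\<in>U. bern (x s) (s \<in> L))"
      unfolding f_def using prod.subset_diff[OF UA A] by (simp add: mult.commute)
    also have "(\<Prod>s\<in>U. bern (x s) (s \<in> L)) = (\<Prod>i\<in>I. \<Prod>s\<in>G i. bern (x s) (s \<in> L))"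
      unfolding U_def using disj finG I by (intro prod.UNION_disjoint) (auto simp: disjoint_family_on_def)
    moreover have "L \<inter> U \<inter> G i = L \<inter> G i" if "i \<in> I" for i using that unfolding U_def by blast
    ultimately show ?thesis unfolding g_def by (simp add: prod.distrib mult.assoc)
  qed
  have "A = (A - U) \<union> U" using UA by blast
  then have "(\<Sum>L\<in>Pow A. (\<Prod>s\<in>A. bern (x s) (s \<in> L)) * (\<Prod>i\<in>I. H i (L \<inter> G i)))
      = (\<Sum>X\<in>Pow (A - U). f X) * (\<Sum>Y\<in>Pow U. \<Prod>i\<in>I. g i (Y \<inter> G i))"
    using sum_Pow_Un_mult[of "A - U" U f "\<lambda>Y. \<Prod>i\<in>I. g i (Y \<inter> G i)"] A finU
    by (simp add: split Int_commute)
  also have "(\<Sum>X\<in>Pow (A - U). f X) = 1"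
    unfolding f_def using A by (simp add: sum_Pow_bern)
  also have "(\<Sum>Y\<in>Pow U. \<Prod>i\<in>I. g i (Y \<inter> G i)) = (\<Prod>i\<in>I. \<Sum>B\<in>Pow (G i). g i B)"
    unfolding U_def by (rule sum_Pow_UN_prod[OF I finG disj])
  finally show ?thesis unfolding g_def by simp
qed

lemma sum_Pow_bern_all:
  assumes "finite G"
  shows "(\<Sum>B\<in>Pow G. (\<Prod>s\<in>G. bern (x s) (s \<in> B)) * of_bool ((B = G) \<longleftrightarrow> P))
       = (if P then prod x G else 1 - prod x G)"
proof -
  have all: "(\<Sum>B\<in>Pow G. (\<Prod>s\<in>G. bern (x s) (s \<in> B)) * of_bool (B = G)) = prod x G"
    using assms by (simp add: of_bool_def if_distrib sum.delta cong: if_cong, simp add: bern_def)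
  have total: "(\<Sum>B\<in>Pow G. \<Prod>s\<in>G. bern (x s) (s \<in> B)) = 1"
    using assms by (rule sum_Pow_bern)
  have "of_bool (B \<noteq> G) = 1 - (of_bool (B = G) :: real)" for B by simp
  then show ?thesis
    using all total by (cases P) (simp_all add: right_diff_distrib sum_subtractf)
qed

subsection \<open>Private technologies without indirect learning\<close>

lemma finite_offdiag: "finite (offdiag n)"
  by (rule finite_subset[of _ "{..<n} \<times> {..<n}"]) (auto simp: offdiag_def)

lemma weight_delta0:
  assumes "M \<subseteq> L" "L \<subseteq> offdiag n"
  shows "weight n 0 p q D L M = (if M = {} then
      (\<Prod>j<n. bern (p j) (j \<in> D)) * (\<Prod>s\<in>offdiag n. bern (iota (q (fst s)) (q (snd s))) (s \<in> L))
    else 0)"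
proof (cases "M = {}")
  case False
  then obtain a b where "(a, b) \<in> M" by auto
  with assms show ?thesis
    unfolding weight_def using finite_offdiag by (auto intro!: prod_zero bexI[of _ "(a, b)"])
qed (auto simp: weight_def bern_def intro!: arg_cong2[where f="(*)"] prod.cong)

lemma expected_PT_delta0:
  "expected_PT n k 0 p q i = (\<Sum>D\<in>Pow {..<n}. \<Sum>L\<in>Pow (offdiag n).
     (\<Prod>j<n. bern (p j) (j \<in> D)) * (\<Prod>s\<in>offdiag n. bern (iota (q (fst s)) (q (snd s))) (s \<in> L))
       * real (card (PT n k D L {} i)))"
  unfolding expected_PT_def
proof (intro sum.cong refl)
  fix D L assume "L \<in> Pow (offdiag n)"
  moreover have "finite L" if "L \<subseteq> offdiag n" using finite_subset[OF that finite_offdiag] .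
  ultimately show "(\<Sum>M\<in>Pow L. weight n 0 p q D L M * real (card (PT n k D L M i))) =
    (\<Prod>j<n. bern (p j) (j \<in> D)) * (\<Prod>s\<in>offdiag n. bern (iota (q (fst s)) (q (snd s))) (s \<in> L))
       * real (card (PT n k D L {} i))"
    by (simp add: weight_delta0 if_distrib[of "\<lambda>x. x * _"] sum.If_cases Int_absorb1 cong: if_cong)
qed

definition direct_links :: "nat set \<Rightarrow> nat \<Rightarrow> (nat \<times> nat) set" where
  "direct_links t m = {m} \<times> (t - {m})"

definition candidates :: "nat \<Rightarrow> nat \<Rightarrow> nat \<Rightarrow> nat set set" where
  "candidates n k i = {t. t \<subseteq> {..<n} \<and> card t = k \<and> i \<in> t}"

definition link_prob :: "(nat \<Rightarrow> real) \<Rightarrow> nat set \<Rightarrow> nat \<Rightarrow> real" where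
  "link_prob q t m = (\<Prod>j\<in>t - {m}. iota (q m) (q j))"

lemma finite_candidates: "finite (candidates n k i)"
  unfolding candidates_def by (rule finite_subset[of _ "Pow {..<n}"]) auto

lemma card_candidates:
  assumes "i < n" "1 \<le> k"
  shows "card (candidates n k i) = (n - 1) choose (k - 1)"
proof -
  let ?S = "{B. B \<subseteq> {..<n} - {i} \<and> card B = k - 1}"
  have "candidates n k i = insert i ` ?S"
  proof (intro equalityI subsetI)
    fix t assume t: "t \<in> candidates n k i"
    then have "finite t" unfolding candidates_def using finite_subset by blast
    with t have "t - {i} \<in> ?S" "t = insert i (t - {i})" unfolding candidates_def by auto
    then show "t \<in> insert i ` ?S" by blast
  next
    fix t assume "t \<in> insert i ` ?S"
    then obtain B where B: "B \<subseteq> {..<n} - {i}" "card B = k - 1" "t = insert i B" by blast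
    then have "finite B" "i \<notin> B" using finite_subset by auto
    with B assms show "t \<in> candidates n k i" unfolding candidates_def by auto
  qed
  moreover have "inj_on (insert i) ?S"
    by (rule inj_onI) (metis Diff_insert_absorb Diff_iff insertI1 mem_Collect_eq subset_iff)
  ultimately have "card (candidates n k i) = card ?S" by (simp add: card_image)
  also have "\<dots> = (n - 1) choose (k - 1)"
    using n_subsets[of "{..<n} - {i}" "k - 1"] assms by simp
  finally show ?thesis .
qed

lemma knows_no_indirect:
  "t \<subseteq> D \<Longrightarrow> knows D L {} m t \<longleftrightarrow> direct_links t m \<subseteq> L"
  unfolding knows_def learned_def indirect_net_def direct_links_def by auto

lemma card_PT_delta0:
  assumes "D \<subseteq> {..<n}"
  shows "real (card (PT n k D L {} i)) = (\<Sum>t\<in>candidates n k i. of_bool (t \<subseteq> D) *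
    (\<Prod>m<n. of_bool (direct_links t m \<subseteq> L \<longleftrightarrow> m = i)))"
proof -
  have PT: "PT n k D L {} i = {t \<in> candidates n k i. t \<subseteq> D \<and>
      (\<forall>m\<in>{..<n}. direct_links t m \<subseteq> L \<longleftrightarrow> m = i)}"
    using assms unfolding PT_def candidates_def by (auto simp: knows_no_indirect)
  define P where "P t \<longleftrightarrow> t \<subseteq> D \<and> (\<forall>m\<in>{..<n}. direct_links t m \<subseteq> L \<longleftrightarrow> m = i)" for t
  have "(\<Sum>t\<in>candidates n k i. of_bool (P t)) = real (card (candidates n k i \<inter> {t. P t}))"
    using finite_candidates by simp
  then show ?thesis
    unfolding PT P_def by (simp add: prod_of_bool Int_def conj_commute flip: of_bool_conj)
qed

lemma sum_Pow_discovered: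
  fixes p :: "nat \<Rightarrow> real"
  assumes "t \<subseteq> {..<n}"
  shows "(\<Sum>D\<in>Pow {..<n}. (\<Prod>j<n. bern (p j) (j \<in> D)) * of_bool (t \<subseteq> D)) = prod p t"
proof -
  have fin: "finite t" by (rule finite_subset[OF assms]) simp
  have "of_bool (t \<subseteq> D) = (\<Prod>j\<in>t. of_bool ((D \<inter> {j} = {j}) \<longleftrightarrow> True) :: real)" for D
    using fin by (auto simp: prod_of_bool)
  then have "(\<Sum>D\<in>Pow {..<n}. (\<Prod>j<n. bern (p j) (j \<in> D)) * of_bool (t \<subseteq> D))
      = (\<Prod>j\<in>t. \<Sum>B\<in>Pow {j}. (\<Prod>s\<in>{j}. bern (p s) (s \<in> B)) * of_bool ((B = {j}) \<longleftrightarrow> True))"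
    using assms fin
    by (simp only:) (rule sum_Pow_bern_blocks, auto simp: disjoint_family_on_def)
  also have "\<dots> = prod p t"
    by (simp only: sum_Pow_bern_all finite.emptyI finite_insert) simp
  finally show ?thesis .
qed

lemma prod_direct_links:
  "(\<Prod>s\<in>direct_links t m. iota (q (fst s)) (q (snd s))) = link_prob q t m"
proof -
  have "direct_links t m = Pair m ` (t - {m})" "inj_on (Pair m) (t - {m})"
    unfolding direct_links_def by (auto simp: inj_on_def)
  then show ?thesis unfolding link_prob_def by (simp add: prod.reindex)
qed

lemma sum_Pow_links:
  assumes "t \<subseteq> {..<n}"
  shows "(\<Sum>L\<in>Pow (offdiag n). (\<Prod>s\<in>offdiag n. bern (iota (q (fst s)) (q (snd s))) (s \<in> L))
          * (\<Prod>m<n. of_bool (direct_links t m \<subseteq> L \<longleftrightarrow> m = i)))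
       = (\<Prod>m<n. if m = i then link_prob q t m else 1 - link_prob q t m)"
proof -
  have fin: "finite (direct_links t m)" for m
    using finite_subset[OF assms] unfolding direct_links_def by simp
  have "direct_links t m \<subseteq> L \<longleftrightarrow> L \<inter> direct_links t m = direct_links t m" for L m by blast
  then have "(\<Sum>L\<in>Pow (offdiag n). (\<Prod>s\<in>offdiag n. bern (iota (q (fst s)) (q (snd s))) (s \<in> L))
          * (\<Prod>m<n. of_bool (direct_links t m \<subseteq> L \<longleftrightarrow> m = i)))
      = (\<Prod>m<n. \<Sum>B\<in>Pow (direct_links t m). (\<Prod>s\<in>direct_links t m. bern (iota (q (fst s)) (q (snd s))) (s \<in> B))
          * of_bool ((B = direct_links t m) \<longleftrightarrow> m = i))"
    using assms
    by (simp only:) (rule sum_Pow_bern_blocks[OF finite_offdiag],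
        auto simp: disjoint_family_on_def direct_links_def offdiag_def)
  also have "\<dots> = (\<Prod>m<n. if m = i then link_prob q t m else 1 - link_prob q t m)"
    by (simp only: sum_Pow_bern_all[OF fin] prod_direct_links)
  finally show ?thesis .
qed

lemma expected_PT_delta0_candidates:
  "expected_PT n k 0 p q i = (\<Sum>t\<in>candidates n k i.
     prod p t * (\<Prod>m<n. if m = i then link_prob q t m else 1 - link_prob q t m))"
proof -
  let ?WD = "\<lambda>D. \<Prod>j<n. bern (p j) (j \<in> D)"
  let ?WL = "\<lambda>L. \<Prod>s\<in>offdiag n. bern (iota (q (fst s)) (q (snd s))) (s \<in> L)"
  let ?F = "\<lambda>t L. \<Prod>m<n. of_bool (direct_links t m \<subseteq> L \<longleftrightarrow> m = i)"
  have "expected_PT n k 0 p q i = (\<Sum>D\<in>Pow {..<n}. \<Sum>L\<in>Pow (offdiag n). \<Sum>t\<in>candidates n k i.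
      (?WD D * of_bool (t \<subseteq> D)) * (?WL L * ?F t L))"
    unfolding expected_PT_delta0
    by (intro sum.cong refl) (simp add: card_PT_delta0 sum_distrib_left mult_ac)
  also have "\<dots> = (\<Sum>t\<in>candidates n k i. (\<Sum>D\<in>Pow {..<n}. ?WD D * of_bool (t \<subseteq> D))
      * (\<Sum>L\<in>Pow (offdiag n). ?WL L * ?F t L))"
    by (simp only: sum.swap[where B="candidates n k i"] sum_product)
  also have "\<dots> = (\<Sum>t\<in>candidates n k i.
      prod p t * (\<Prod>m<n. if m = i then link_prob q t m else 1 - link_prob q t m))"
    by (intro sum.cong refl arg_cong2[where f="(*)"] sum_Pow_discovered sum_Pow_links)
      (auto simp: candidates_def)
  finally show ?thesis .
qed

subsection \<open>Unilateral deviations from a symmetric profile\<close>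

text \<open>The probability that a fixed candidate technology is private to a firm playing interaction
rate b against opponents playing q: it learns from its k - 1 partners, none of these learns from
all k - 1 other members, and none of the n - k outsiders learns from all k members.\<close>

definition private_prob :: "nat \<Rightarrow> nat \<Rightarrow> real \<Rightarrow> real \<Rightarrow> real" where
  "private_prob n k q b = (b*q)^(k-1) * (1 - q*b*(q*q)^(k-2))^(k-1) * (1 - q*b*(q*q)^(k-1))^(n-k)"

text \<open>Up to the positive factor G(q) / (q (1 - (q^2)^(k-1)) (1 - (q^2)^k)), the derivative of
b \<mapsto> private_prob n k q b at b = q.\<close>

definition interaction_foc :: "nat \<Rightarrow> nat \<Rightarrow> real \<Rightarrow> real" where
  "interaction_foc n k q = real (k-1) * (1 - 2*(q*q)^(k-1)) * (1 - (q*q)^k)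
     - real (n-k) * (q*q)^k * (1 - (q*q)^(k-1))"

lemma link_prob_deviation:
  assumes "t \<in> candidates n k i" "2 \<le> k"
  shows "link_prob ((\<lambda>_. q)(i := b)) t m =
    (if m = i then (b*q)^(k-1) else if m \<in> t then q*b*(q*q)^(k-2) else q*b*(q*q)^(k-1))"
proof -
  have t: "finite t" "card t = k" "i \<in> t"
    using assms(1) finite_subset unfolding candidates_def by auto
  let ?q = "(\<lambda>_. q)(i := b)"
  have others: "(\<Prod>j\<in>S - {i}. iota (?q m) (?q j)) = (q*q)^card (S - {i})" if "m \<noteq> i" for S
    using that by (simp add: iota_def)
  consider "m = i" | "m \<noteq> i" "m \<in> t" | "m \<notin> t" using t by blast
  then show ?thesis
  proof cases
    case 1
    then show ?thesis using t by (simp add: link_prob_def iota_def)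
  next
    case 2
    then have "link_prob ?q t m = iota q b * (\<Prod>j\<in>t - {m} - {i}. iota (?q m) (?q j))"
      unfolding link_prob_def using t by (subst prod.remove[of _ i]) auto
    then show ?thesis using 2 t others[of "t - {m}"] by (simp add: iota_def numeral_2_eq_2)
  next
    case 3
    then have "m \<noteq> i" using t by blast
    have "link_prob ?q t m = iota q b * (\<Prod>j\<in>t - {i}. iota (?q m) (?q j))"
      unfolding link_prob_def using t 3 \<open>m \<noteq> i\<close> by (subst prod.remove[of _ i]) auto
    then show ?thesis using 3 t others[OF \<open>m \<noteq> i\<close>, of t] \<open>m \<noteq> i\<close> by (simp add: iota_def)
  qed
qed

lemma expected_PT_deviation:
  assumes k: "2 \<le> k" and i: "i < n"
  shows "expected_PT n k 0 ((\<lambda>_. p)(i := a)) ((\<lambda>_. q)(i := b)) i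
    = real ((n-1) choose (k-1)) * (a * p^(k-1)) * private_prob n k q b"
proof -
  let ?p = "(\<lambda>_. p)(i := a)" and ?q = "(\<lambda>_. q)(i := b)"
  let ?f = "\<lambda>t m. if m = i then link_prob ?q t m else 1 - link_prob ?q t m"
  have candidate: "prod ?p t * (\<Prod>m<n. ?f t m) = a * p^(k-1) * private_prob n k q b"
    if t_cand: "t \<in> candidates n k i" for t
  proof -
    have t: "t \<subseteq> {..<n}" "card t = k" "i \<in> t" "finite t"
      using t_cand finite_subset unfolding candidates_def by auto
    have "prod ?p t = a * p^(k-1)"
      using t by (simp add: prod.remove[of t i])
    moreover have "(\<Prod>m\<in>{..<n} - t. ?f t m) = (1 - q*b*(q*q)^(k-1))^(n-k)"
    proof -
      have "(\<Prod>m\<in>{..<n} - t. ?f t m) = (\<Prod>m\<in>{..<n} - t. 1 - q*b*(q*q)^(k-1))"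
        using t by (intro prod.cong) (auto simp: link_prob_deviation[OF t_cand k])
      then show ?thesis using t by (simp add: card_Diff_subset)
    qed
    moreover have "(\<Prod>m\<in>t. ?f t m) = (b*q)^(k-1) * (1 - q*b*(q*q)^(k-2))^(k-1)"
      using t by (simp add: prod.remove[of t i] link_prob_deviation[OF t_cand k])
    moreover have "(\<Prod>m<n. ?f t m) = (\<Prod>m\<in>{..<n} - t. ?f t m) * (\<Prod>m\<in>t. ?f t m)"
      using t by (simp add: prod.subset_diff)
    ultimately show ?thesis by (simp add: private_prob_def mult_ac)
  qed
  have "expected_PT n k 0 ?p ?q i = (\<Sum>t\<in>candidates n k i. a * p^(k-1) * private_prob n k q b)"
    unfolding expected_PT_delta0_candidates by (intro sum.cong refl candidate)
  then show ?thesis using card_candidates[OF i] k by simp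
qed

lemma sym_inv_eq_delta0_iff:
  assumes k: "2 \<le> k" and n: "0 < n"
  shows "sym_inv_eq k 0 c n p q \<longleftrightarrow> 0 < p \<and> admissible p q \<and>
     (\<forall>a b. admissible a b \<longrightarrow>
        real ((n-1) choose (k-1)) * (a * p^(k-1)) * private_prob n k q b - c a
          \<le> real ((n-1) choose (k-1)) * (p * p^(k-1)) * private_prob n k q q - c p)"
proof -
  have dev: "payoff n k 0 c ((\<lambda>_. p)(i := a)) ((\<lambda>_. q)(i := b)) i
      = real ((n-1) choose (k-1)) * (a * p^(k-1)) * private_prob n k q b - c a" if "i < n" for i a b
    unfolding payoff_def using expected_PT_deviation[OF k that] by simp
  have "(\<lambda>_. x)(i := x) = (\<lambda>_. x)" for x :: real and i :: nat by auto
  then have stay: "payoff n k 0 c (\<lambda>_. p) (\<lambda>_. q) i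
      = real ((n-1) choose (k-1)) * (p * p^(k-1)) * private_prob n k q q - c p" if "i < n" for i
    using dev[OF that, of p q] by simp
  show ?thesis
    unfolding sym_inv_eq_def nash_eq_def using dev stay n by auto
qed

subsection \<open>The first-order condition for the interaction rate\<close>

lemma square_power_in_unit:
  fixes q :: real
  assumes "0 < q" "q < 1" "0 < j"
  shows "0 < (q*q)^j" "(q*q)^j < 1"
  using assms mult_strict_mono[of q 1 q 1] by (auto simp: power_less_one_iff)

lemma private_prob_diag:
  assumes "2 \<le> k"
  shows "private_prob n k q q = (q*q)^(k-1) * (1 - (q*q)^(k-1))^(k-1) * (1 - (q*q)^k)^(n-k)"
proof -
  obtain j where "k = Suc (Suc j)" using assms by (metis add_2_eq_Suc le_Suc_ex)
  then show ?thesis unfolding private_prob_def by (simp add: power_mult_distrib mult_ac)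
qed

lemma private_prob_affine_factors:
  assumes k: "2 \<le> k" and q: "0 < q" "q < 1"
  defines "y \<equiv> (q*q)^(k-1)" and "z \<equiv> (q*q)^k"
  shows "private_prob n k q b = private_prob n k q q
    * ((1 + (b - q) * (1 / q))^(k-1) * (1 + (b - q) * - (y / (q * (1 - y))))^(k-1)
    * (1 + (b - q) * - (z / (q * (1 - z))))^(n-k))"
proof -
  have yz: "y < 1" "z < 1" unfolding y_def z_def using square_power_in_unit q k by auto
  obtain j where j: "k = Suc (Suc j)" using k by (metis add_2_eq_Suc le_Suc_ex)
  have ey: "q*x*(q*q)^(k-2) = x * y / q" and ez: "q*x*(q*q)^(k-1) = x * z / q" for x
    unfolding y_def z_def using q by (simp_all add: j field_simps)
  have e1: "b*q = (q*q) * (1 + (b - q) * (1 / q))"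
    and e2: "1 - q*b*(q*q)^(k-2) = (1 - y) * (1 + (b - q) * - (y / (q * (1 - y))))"
    and e3: "1 - q*b*(q*q)^(k-1) = (1 - z) * (1 + (b - q) * - (z / (q * (1 - z))))"
    unfolding ey ez using q yz by (simp_all add: field_simps)
  have "private_prob n k q b = ((q*q) * (1 + (b - q) * (1 / q)))^(k-1)
      * ((1 - y) * (1 + (b - q) * - (y / (q * (1 - y)))))^(k-1)
      * ((1 - z) * (1 + (b - q) * - (z / (q * (1 - z)))))^(n-k)"
    unfolding private_prob_def by (simp only: e1 e2 e3)
  moreover have "(a1*x1)^l * (a2*x2)^l * (a3*x3)^r = a1^l * a2^l * a3^r * (x1^l * x2^l * x3^r)"
    for a1 a2 a3 x1 x2 x3 :: real and l r :: nat
    by (simp add: power_mult_distrib mult_ac)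
  ultimately show ?thesis
    unfolding private_prob_diag[OF k] by (simp only: y_def z_def)
qed

lemma power_le_exp_mult: "0 \<le> (x::real) \<Longrightarrow> x^m \<le> exp (real m * (x - 1))"
proof -
  assume "0 \<le> x"
  moreover have "x \<le> exp (x - 1)" using exp_ge_add_one_self[of "x - 1"] by simp
  ultimately have "x^m \<le> exp (x - 1)^m" by (simp add: power_mono)
  then show ?thesis by (simp add: exp_of_nat_mult)
qed

lemma affine_powers_le_exp:
  fixes t a b c :: real
  assumes "0 \<le> 1 + t*a" "0 \<le> 1 + t*b" "0 \<le> 1 + t*c"
  shows "(1 + t*a)^l * (1 + t*b)^m * (1 + t*c)^r \<le> exp (t * (real l * a + real m * b + real r * c))"
proof -
  have "(1 + t*a)^l * (1 + t*b)^m * (1 + t*c)^r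
      \<le> exp (real l * (t*a)) * exp (real m * (t*b)) * exp (real r * (t*c))"
    using power_le_exp_mult[OF assms(1), of l] power_le_exp_mult[OF assms(2), of m]
      power_le_exp_mult[OF assms(3), of r] assms
    by (intro mult_mono) auto
  then show ?thesis by (simp add: algebra_simps flip: exp_add)
qed

lemma affine_powers_has_derivative:
  fixes x0 a b c :: real
  shows "((\<lambda>x. (1 + (x - x0)*a)^l * (1 + (x - x0)*b)^m * (1 + (x - x0)*c)^r)
    has_real_derivative (real l * a + real m * b + real r * c)) (at x0)"
  by (rule derivative_eq_intros refl)+ simp

lemma foc_slope:
  assumes k: "2 \<le> k" and q: "0 < q" "q < 1"
  defines "y \<equiv> (q*q)^(k-1)" and "z \<equiv> (q*q)^k"
  shows "(real (k-1) * (1 / q) + real (k-1) * - (y / (q * (1 - y))) + real (n-k) * - (z / (q * (1 - z))))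
    * (q * (1 - y) * (1 - z)) = interaction_foc n k q"
proof -
  have "y < 1" "z < 1" unfolding y_def z_def using square_power_in_unit q k by auto
  define d where "d = q * (1 - y) * (1 - z)"
  have e: "1 / q * d = (1 - y) * (1 - z)" "y / (q * (1 - y)) * d = y * (1 - z)"
    "z / (q * (1 - z)) * d = z * (1 - y)"
    unfolding d_def using q \<open>y < 1\<close> \<open>z < 1\<close> by simp_all
  have lin: "(m * a1 + m * - a2 + r * - a3) * d = m * (a1 * d) - m * (a2 * d) - r * (a3 * d)"
    for m r a1 a2 a3 :: real by (simp add: algebra_simps)
  show ?thesis
    unfolding interaction_foc_def y_def[symmetric] z_def[symmetric] d_def[symmetric] lin e
    by (simp add: algebra_simps)
qed

lemma private_prob_diag_pos:
  assumes "2 \<le> k" "0 < q" "q < 1"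
  shows "0 < private_prob n k q q"
  using square_power_in_unit[of q "k-1"] square_power_in_unit[of q k] assms
  by (simp add: private_prob_diag)

lemma private_prob_le_at_foc_root:
  assumes k: "2 \<le> k" and q: "0 < q" "q < 1" and foc: "interaction_foc n k q = 0"
    and b: "0 \<le> b" "b \<le> 1"
  shows "private_prob n k q b \<le> private_prob n k q q"
proof -
  define y where "y = (q*q)^(k-1)"
  define z where "z = (q*q)^k"
  have factor_nonneg: "0 \<le> 1 + (b - q) * - (w / (q * (1 - w)))" if "0 \<le> w" "w \<le> q" "w < 1" for w
  proof -
    have "b * w \<le> q" using b that by (metis mult_left_le_one_le order.trans)
    then have "0 \<le> (q - b * w) / (q * (1 - w))" using q that by simp
    also have "(q - b * w) / (q * (1 - w)) = 1 + (b - q) * - (w / (q * (1 - w)))"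
      using q that by (simp add: field_simps)
    finally show ?thesis .
  qed
  have "(q*q)^j \<le> q" if "0 < j" for j
  proof -
    have "(q*q)^j \<le> (q*q)^1"
      using that q by (intro power_decreasing) (auto intro: mult_le_one)
    also have "\<dots> \<le> q" using q mult_left_le_one_le[of q q] by simp
    finally show ?thesis .
  qed
  then have yz: "0 \<le> y" "y \<le> q" "y < 1" "0 \<le> z" "z \<le> q" "z < 1"
    unfolding y_def z_def using square_power_in_unit[OF q] k by auto
  have slope: "real (k-1) * (1 / q) + real (k-1) * - (y / (q * (1 - y))) + real (n-k) * - (z / (q * (1 - z))) = 0"
    using foc_slope[OF k q, of n] foc yz q unfolding y_def[symmetric] z_def[symmetric] by simp
  have "private_prob n k q b = private_prob n k q q
    * ((1 + (b - q) * (1 / q))^(k-1) * (1 + (b - q) * - (y / (q * (1 - y))))^(k-1)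
    * (1 + (b - q) * - (z / (q * (1 - z))))^(n-k))"
    unfolding y_def z_def by (rule private_prob_affine_factors[OF k q])
  also have "\<dots> \<le> private_prob n k q q * exp ((b - q) * 0)"
  proof (intro mult_left_mono)
    have "0 \<le> 1 + (b - q) * (1 / q)" using b q by (simp add: field_simps)
    from affine_powers_le_exp[OF this factor_nonneg[OF yz(1-3)] factor_nonneg[OF yz(4-6)],
        of "k-1" "k-1" "n-k", unfolded slope]
    show "(1 + (b - q) * (1 / q))^(k-1) * (1 + (b - q) * - (y / (q * (1 - y))))^(k-1)
        * (1 + (b - q) * - (z / (q * (1 - z))))^(n-k) \<le> exp ((b - q) * 0)"
      .
    show "0 \<le> private_prob n k q q" using private_prob_diag_pos[OF k q] by (simp add: less_imp_le)
  qed
  finally show ?thesis by simp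
qed

lemma foc_root_of_max:
  assumes k: "2 \<le> k" and q: "0 < q" "q < 1"
    and max: "\<And>b. 0 \<le> b \<Longrightarrow> b \<le> 1 \<Longrightarrow> private_prob n k q b \<le> private_prob n k q q"
  shows "interaction_foc n k q = 0"
proof -
  define y where "y = (q*q)^(k-1)"
  define z where "z = (q*q)^k"
  define slope where "slope = real (k-1) * (1 / q) + real (k-1) * - (y / (q * (1 - y)))
    + real (n-k) * - (z / (q * (1 - z)))"
  define Gq where "Gq = private_prob n k q q"
  have G: "private_prob n k q = (\<lambda>b. Gq * ((1 + (b - q) * (1 / q))^(k-1)
    * (1 + (b - q) * - (y / (q * (1 - y))))^(k-1) * (1 + (b - q) * - (z / (q * (1 - z))))^(n-k)))"
    unfolding y_def z_def Gq_def by (rule ext private_prob_affine_factors[OF k q])+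
  have "(private_prob n k q has_real_derivative Gq * slope) (at q)"
    unfolding slope_def G by (intro DERIV_cmult affine_powers_has_derivative)
  then have "Gq * slope = 0"
    by (rule DERIV_local_max[of _ _ _ "min q (1 - q)"]) (use q max in \<open>auto simp: abs_if Gq_def\<close>)
  then have "slope = 0" using private_prob_diag_pos[OF k q, of n] by (simp add: Gq_def)
  then show ?thesis
    using foc_slope[OF k q, of n] unfolding slope_def y_def z_def by simp
qed

lemma sym_inv_eq_imp_foc_root:
  assumes k: "2 \<le> k" "k \<le> n" and c: "cost_ok c" and eq: "sym_inv_eq k 0 c n p q"
  shows "0 < q \<and> q < 1 \<and> interaction_foc n k q = 0"
proof -
  define C where "C = real ((n-1) choose (k-1))"
  have n: "0 < n" and C: "0 < C" using k unfolding C_def by auto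
  have p: "0 < p" "p < 1" and q: "0 \<le> q" "q \<le> 1"
    and opt: "\<And>a b. admissible a b \<Longrightarrow>
       C * (a * p^(k-1)) * private_prob n k q b - c a \<le> C * (p * p^(k-1)) * private_prob n k q q - c p"
    using eq unfolding sym_inv_eq_delta0_iff[OF k(1) n] C_def admissible_def by auto
  have "c 0 < c p" and c0: "c 0 = 0"
    using c p strict_mono_onD[of "{0..<1}" c 0 p] unfolding cost_ok_def by auto
  have max: "private_prob n k q b \<le> private_prob n k q q" if "0 \<le> b" "b \<le> 1" for b
  proof -
    have "C * p^k * private_prob n k q b \<le> C * p^k * private_prob n k q q"
      using opt[of p b] that p k by (simp add: admissible_def power_eq_if[of p k])
    then show ?thesis using C p by simp
  qed
  have "q \<noteq> 0"
  proof
    assume "q = 0"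
    then have "private_prob n k q b = 0" for b using k by (simp add: private_prob_def)
    then show False using opt[of 0 0] \<open>c 0 < c p\<close> c0 by (simp add: admissible_def)
  qed
  moreover have "q \<noteq> 1"
  proof
    assume "q = 1"
    then have "private_prob n k q q = 0" using k by (simp add: private_prob_diag)
    moreover have "0 < private_prob n k q (1/2)" using \<open>q = 1\<close> by (simp add: private_prob_def)
    ultimately show False using max[of "1/2"] by simp
  qed
  ultimately have "0 < q" "q < 1" using q by auto
  then show ?thesis using foc_root_of_max[OF k(1)] max by blast
qed

lemma foc_root_exists:
  assumes k: "2 \<le> k"
  shows "\<exists>q. 0 < q \<and> q < 1 \<and> interaction_foc n k q = 0"
proof -
  define q0 where "q0 = root (2*(k-1)) (3/4)"
  have "q0 ^ (2*(k-1)) = 3/4" "0 < q0" "q0 < 1"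
    unfolding q0_def using k by (auto intro: real_root_gt_zero)
  then have y0: "(q0*q0)^(k-1) = 3/4" and q0: "0 < q0" "q0 < 1"
    by (simp_all add: power_mult power2_eq_square)
  have "0 \<le> (q0*q0)^k" "(q0*q0)^k < 1" using square_power_in_unit[OF q0] k by auto
  then have "real (k-1) * (1 - 2*(3/4)) * (1 - (q0*q0)^k) < 0" "0 \<le> real (n-k) * (q0*q0)^k * (1 - 3/4)"
    using k by (auto intro: mult_pos_neg)
  then have "interaction_foc n k q0 < 0"
    unfolding interaction_foc_def y0 by linarith
  moreover have "interaction_foc n k 0 = real (k-1)"
    unfolding interaction_foc_def using k by (simp add: power_0_left)
  moreover have "continuous_on {0..q0} (interaction_foc n k)"
    unfolding interaction_foc_def by (intro continuous_intros)
  ultimately obtain q where "0 \<le> q" "q \<le> q0" "interaction_foc n k q = 0"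
    using IVT2'[of "interaction_foc n k" q0 0 0] q0 k by auto
  moreover have "q \<noteq> 0" using calculation \<open>interaction_foc n k 0 = real (k-1)\<close> k by auto
  ultimately show ?thesis using q0 by (intro exI[of _ q]) auto
qed

subsection \<open>Best responses in investment\<close>

lemma cost_ok_derivative:
  assumes "cost_ok c"
  obtains c' where "continuous_on {0..<1} c'"
    and "\<And>p a. 0 < p \<Longrightarrow> p < 1 \<Longrightarrow> 0 \<le> a \<Longrightarrow> a < 1 \<Longrightarrow> c' p * (a - p) \<le> c a - c p"
    and "\<And>M. \<exists>x. 1/2 < x \<and> x < 1 \<and> M \<le> c' x"
proof -
  obtain c' where der: "\<And>x. x \<in> {0..<1} \<Longrightarrow> (c has_real_derivative c' x) (at x within {0..<1})"
    and cont: "continuous_on {0..<1} c'"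
    using assms unfolding cost_ok_def by blast
  have cvx: "convex_on {0..<1} c" and c0: "c 0 = 0" and lim: "filterlim c at_top (at_left 1)"
    using assms unfolding cost_ok_def by auto
  have tangent: "c' p * (a - p) \<le> c a - c p" if "0 < p" "p < 1" "0 \<le> a" "a < 1" for p a
    by (rule convex_on_imp_above_tangent[OF cvx connected_Ico])
      (use that der in \<open>auto simp: interior_atLeastLessThan\<close>)
  have "\<exists>x. 1/2 < x \<and> x < 1 \<and> M \<le> c' x" for M
  proof -
    have "\<forall>\<^sub>F x in at_left 1. x \<in> {1/2<..<(1::real)}"
      by (rule eventually_at_left_real) simp
    moreover have "\<forall>\<^sub>F x in at_left 1. max M 1 \<le> c x"
      using lim unfolding filterlim_at_top by blast
    ultimately have "\<forall>\<^sub>F x in at_left 1. max M 1 \<le> c x \<and> x \<in> {1/2<..<(1::real)}"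
      by eventually_elim auto
    then obtain x where x: "max M 1 \<le> c x" "1/2 < x" "x < 1"
      using eventually_happens'[OF trivial_limit_at_left_real] by fastforce
    have "c x \<le> c' x * x" using tangent[of x 0] x c0 by simp
    moreover have "0 < c' x * x" using x calculation by simp
    then have "0 < c' x" using x by (simp add: zero_less_mult_iff)
    then have "c' x * x \<le> c' x" using x by (simp add: mult_left_le)
    ultimately show ?thesis using x by (intro exI[of _ x]) auto
  qed
  then show ?thesis using that cont tangent by blast
qed

lemma cost_ok_best_response:
  assumes "cost_ok c"
  shows "\<exists>B. \<forall>M\<ge>B. \<exists>p. 0 < p \<and> p < 1 \<and>
    (\<forall>a. 0 \<le> a \<and> a < 1 \<longrightarrow> a * p^m * M - c a \<le> p * p^m * M - c p)"
proof -
  obtain c' where cont: "continuous_on {0..<1} c'"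
    and tangent: "\<And>p a. 0 < p \<Longrightarrow> p < 1 \<Longrightarrow> 0 \<le> a \<Longrightarrow> a < 1 \<Longrightarrow> c' p * (a - p) \<le> c a - c p"
    and unbounded: "\<And>M. \<exists>x. 1/2 < x \<and> x < 1 \<and> M \<le> c' x"
    using cost_ok_derivative[OF assms] by blast
  \<comment> \<open>For such M the marginal benefit p^m M is above c' at 1/2 and below it close to 1.\<close>
  have "\<exists>p. 0 < p \<and> p < 1 \<and> (\<forall>a. 0 \<le> a \<and> a < 1 \<longrightarrow> a * p^m * M - c a \<le> p * p^m * M - c p)"
    if M: "max 1 (2^m * c' (1/2)) \<le> M" for M
  proof -
    obtain x where x: "1/2 < x" "x < 1" "M \<le> c' x" using unbounded by blast
    define g where "g y = y^m * M - c' y" for y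
    have "0 \<le> g (1/2)" using M by (simp add: g_def field_simps power_divide)
    moreover have "x^m * M \<le> M" using M x by (simp add: power_le_one mult_left_le_one_le)
    then have "g x \<le> 0" using x unfolding g_def by simp
    moreover have "continuous_on {1/2..x} g"
      unfolding g_def using x by (intro continuous_intros continuous_on_subset[OF cont]) auto
    ultimately obtain p where p: "1/2 \<le> p" "p \<le> x" "g p = 0"
      using IVT2'[of g x 0 "1/2"] x by auto
    then have "c' p = p^m * M" unfolding g_def by simp
    with p x tangent[of p] show ?thesis
      by (intro exI[of _ p]) (auto simp: algebra_simps)
  qed
  then show ?thesis by blast
qed

subsection \<open>Asymptotics of the interaction rate\<close>

lemma foc_root_bounds:
  assumes k: "2 \<le> k" "k < n" and q: "0 < q" "q < 1" and foc: "interaction_foc n k q = 0"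
  defines "y \<equiv> (q*q)^(k-1)" and "z \<equiv> (q*q)^k"
  shows "y < 1/2" "z \<le> 2 * real (k-1) / (real n - real k)"
    "real n * z = real n / (real n - real k) * (real (k-1) * (1 - 2*y) * (1 - z) / (1 - y))"
proof -
  have y: "0 < y" "y < 1" and z: "0 < z" "z < 1"
    unfolding y_def z_def using square_power_in_unit[OF q] k by auto
  define m where "m = real (k-1)"
  define r where "r = real n - real k"
  have m: "0 < m" and r: "0 < r" unfolding m_def r_def using k by auto
  have balance: "m * (1 - 2*y) * (1 - z) = r * z * (1 - y)"
    using foc k unfolding interaction_foc_def y_def[symmetric] z_def[symmetric] m_def r_def
    by (simp add: of_nat_diff)
  moreover have "0 < r * z * (1 - y)" using r y z by simp
  ultimately have "0 < m * (1 - 2*y) * (1 - z)" by simp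
  then have "0 < 1 - 2*y" using m z by (auto simp: zero_less_mult_iff)
  then show "y < 1/2" by simp
  have "m * (1 - 2*y) * (1 - z) \<le> m"
    using m y z \<open>0 < 1 - 2*y\<close> by (simp add: mult.assoc mult_le_one mult_left_le)
  moreover have "r * z * (1/2) \<le> r * z * (1 - y)" using \<open>y < 1/2\<close> r z by simp
  ultimately have "r * z \<le> 2 * m" using balance by linarith
  then show "z \<le> 2 * real (k-1) / (real n - real k)"
    using r unfolding m_def[symmetric] r_def[symmetric] by (simp add: field_simps)
  show "real n * z = real n / (real n - real k) * (real (k-1) * (1 - 2*y) * (1 - z) / (1 - y))"
  proof -
    have "z = m * (1 - 2*y) * (1 - z) / (r * (1 - y))"
      using balance r y by (simp add: eq_divide_eq mult_ac)
    then have "real n * z = real n * (m * (1 - 2*y) * (1 - z) / (r * (1 - y)))" by (rule arg_cong)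
    then show ?thesis unfolding m_def r_def by simp
  qed
qed

lemma power_powr_inverse: "0 < w \<Longrightarrow> 0 < k \<Longrightarrow> (w^k) powr (1 / real k) = (w::real)"
  by (simp add: powr_realpow[symmetric] powr_powr)

lemma foc_roots_asymptotics:
  assumes k: "2 \<le> k"
    and roots: "\<forall>\<^sub>F n in sequentially. 0 < Q n \<and> Q n < 1 \<and> interaction_foc n k (Q n) = 0"
  shows "(\<lambda>n. (Q n * Q n)^k) \<longlonglongrightarrow> 0" and "(\<lambda>n. real n * (Q n * Q n)^k) \<longlonglongrightarrow> real (k-1)"
proof -
  define w where "w n = Q n * Q n" for n
  define m where "m = real (k-1)"
  have bounds: "\<forall>\<^sub>F n in sequentially. 0 < w n \<and> 0 < w n ^ (k-1) \<and> w n ^ (k-1) < 1/2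
      \<and> 0 < w n ^ k \<and> w n ^ k \<le> 2 * m / (real n - real k)
      \<and> real n * w n ^ k = real n / (real n - real k)
          * (m * (1 - 2 * w n ^ (k-1)) * (1 - w n ^ k) / (1 - w n ^ (k-1)))"
    using roots eventually_gt_at_top[of k]
  proof eventually_elim
    case (elim n)
    then have q: "0 < Q n" "Q n < 1" and foc: "interaction_foc n k (Q n) = 0" and nk: "k < n" by auto
    show ?case
      using foc_root_bounds[OF k nk q foc] square_power_in_unit[OF q, of "k-1"]
        square_power_in_unit[OF q, of k] q k
      unfolding w_def m_def by simp
  qed
  have upper: "(\<lambda>n. 2 * m / (real n - real k)) \<longlonglongrightarrow> 0" by real_asymp
  have nonneg: "\<forall>\<^sub>F n in sequentially. 0 \<le> w n ^ k"
    and "\<forall>\<^sub>F n in sequentially. w n ^ k \<le> 2 * m / (real n - real k)"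
    using bounds by (auto elim!: eventually_mono)
  from tendsto_sandwich[OF this tendsto_const upper]
  show zlim: "(\<lambda>n. (Q n * Q n)^k) \<longlonglongrightarrow> 0" unfolding w_def .
  have "(\<lambda>n. (w n ^ k) powr (1 / real k)) \<longlonglongrightarrow> 0"
    using k by (intro tendsto_zero_powrI[OF zlim[folded w_def] tendsto_const nonneg]) simp
  moreover have "\<forall>\<^sub>F n in sequentially. (w n ^ k) powr (1 / real k) = w n"
    using bounds k by (auto elim!: eventually_mono simp: power_powr_inverse)
  ultimately have wlim: "w \<longlonglongrightarrow> 0" by (rule Lim_transform_eventually)
  have "(\<lambda>n. real n / (real n - real k)) \<longlonglongrightarrow> 1" by real_asymp
  moreover have "(\<lambda>n. m * (1 - 2 * w n ^ (k-1)) * (1 - w n ^ k) / (1 - w n ^ (k-1))) \<longlonglongrightarrow> m"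
    using k by (auto intro!: tendsto_eq_intros wlim simp: power_0_left)
  ultimately have "(\<lambda>n. real n / (real n - real k) * (m * (1 - 2 * w n ^ (k-1)) * (1 - w n ^ k) / (1 - w n ^ (k-1))))
      \<longlonglongrightarrow> m"
    using tendsto_mult by fastforce
  then show "(\<lambda>n. real n * (Q n * Q n)^k) \<longlonglongrightarrow> real (k-1)"
    unfolding w_def[symmetric] m_def[symmetric]
    by (rule Lim_transform_eventually) (use bounds in \<open>auto elim!: eventually_mono\<close>)
qed

lemma foc_roots_scaling_limit:
  assumes k: "2 \<le> k"
    and roots: "\<forall>\<^sub>F n in sequentially. 0 < Q n \<and> Q n < 1 \<and> interaction_foc n k (Q n) = 0"
  shows "(\<lambda>n. Q n * Q n * real n powr (1 / real k)) \<longlonglongrightarrow> real (k-1) powr (1 / real k)"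
proof -
  have "(\<lambda>n. (real n * (Q n * Q n)^k) powr (1 / real k)) \<longlonglongrightarrow> real (k-1) powr (1 / real k)"
    using k by (intro tendsto_powr[OF foc_roots_asymptotics(2)[OF k roots] tendsto_const]) auto
  moreover have "\<forall>\<^sub>F n in sequentially.
      (real n * (Q n * Q n)^k) powr (1 / real k) = Q n * Q n * real n powr (1 / real k)"
    using roots by eventually_elim (use k in \<open>simp add: powr_mult power_powr_inverse\<close>)
  ultimately show ?thesis by (rule Lim_transform_eventually)
qed

lemma exp_minus_double_le_one_minus:
  fixes z :: real
  assumes "0 \<le> z" "z \<le> 1/2"
  shows "exp (- 2 * z) \<le> 1 - z"
proof -
  have "2 * z^2 \<le> z" using mult_left_mono[of z "1/2" z] assms by (simp add: power2_eq_square)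
  then have "- 2 * z \<le> ln (1 - z)" using ln_one_minus_pos_lower_bound[OF assms] by linarith
  then have "exp (- 2 * z) \<le> exp (ln (1 - z))" by simp
  then show ?thesis using assms by simp
qed

lemma foc_roots_link_mass_at_top:
  assumes k: "2 \<le> k"
    and roots: "\<forall>\<^sub>F n in sequentially. 0 < Q n \<and> Q n < 1 \<and> interaction_foc n k (Q n) = 0"
  shows "filterlim (\<lambda>n. real n * (Q n * Q n)) at_top sequentially"
proof -
  have "filterlim (\<lambda>n. real n powr (1 - 1 / real k)) at_top sequentially"
    using k by real_asymp
  then have lim: "filterlim (\<lambda>n. Q n * Q n * real n powr (1 / real k) * real n powr (1 - 1 / real k)) at_top sequentially"
    using k by (intro filterlim_tendsto_pos_mult_at_top[OF foc_roots_scaling_limit[OF k roots]]) auto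
  have "\<forall>\<^sub>F n in sequentially.
      Q n * Q n * real n powr (1 / real k) * real n powr (1 - 1 / real k) = real n * (Q n * Q n)"
    using eventually_gt_at_top[of 0] by eventually_elim (simp add: mult.assoc flip: powr_add)
  from filterlim_cong[OF refl refl this] lim show ?thesis by simp
qed

lemma private_mass_lower_bound:
  assumes k: "2 \<le> k" "k < n" and q: "0 < q" "q < 1" and foc: "interaction_foc n k q = 0"
    and z: "(q*q)^k \<le> 1/2" "real n * (q*q)^k \<le> 2 * real (k-1)"
  shows "exp (- 4 * real (k-1)) * (real n * (q*q) / (4 * real (k-1)))^(k-1)
    \<le> real ((n-1) choose (k-1)) * private_prob n k q q"
proof -
  define m where "m = real (k-1)"
  have m: "0 < m" using k unfolding m_def by simp
  have "real n / 2 \<le> real (n-1)" using k by (simp add: of_nat_diff)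
  then have "real n / 2 / m \<le> real (n-1) / m" using m by (intro divide_right_mono) auto
  then have "(real n / (2*m))^(k-1) \<le> (real (n-1) / m)^(k-1)"
    using m by (intro power_mono) auto
  also have "\<dots> \<le> real ((n-1) choose (k-1))"
    unfolding m_def using k by (intro binomial_ge_n_over_k_pow_k) simp
  finally have binom: "(real n / (2*m))^(k-1) \<le> real ((n-1) choose (k-1))" .
  have half: "(1/2)^(k-1) \<le> (1 - (q*q)^(k-1))^(k-1)"
    using foc_root_bounds(1)[OF k q foc] by (intro power_mono) auto
  have tail: "exp (- 4*m) \<le> (1 - (q*q)^k)^(n-k)"
  proof -
    have "real (n-k) * (q*q)^k \<le> real n * (q*q)^k"
      using square_power_in_unit[OF q, of k] k by (intro mult_right_mono) auto
    then have "real (n-k) * (q*q)^k \<le> 2*m" using z unfolding m_def by linarith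
    then have "exp (- 4*m) \<le> exp (real (n-k) * (- 2 * (q*q)^k))" by simp
    also have "\<dots> = exp (- 2 * (q*q)^k)^(n-k)" by (rule exp_of_nat_mult)
    also have "\<dots> \<le> (1 - (q*q)^k)^(n-k)"
      using z square_power_in_unit[OF q, of k] k by (intro power_mono exp_minus_double_le_one_minus) auto
    finally show ?thesis .
  qed
  have "(real n / (2*m))^(k-1) * (q*q)^(k-1) \<le> real ((n-1) choose (k-1)) * (q*q)^(k-1)"
    using binom by (rule mult_right_mono) simp
  then have "(real n / (2*m))^(k-1) * (q*q)^(k-1) * (1/2)^(k-1)
      \<le> real ((n-1) choose (k-1)) * (q*q)^(k-1) * (1 - (q*q)^(k-1))^(k-1)"
    using half by (rule mult_mono) auto
  then have "exp (- 4*m) * ((real n / (2*m))^(k-1) * (q*q)^(k-1) * (1/2)^(k-1))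
      \<le> (1 - (q*q)^k)^(n-k) * (real ((n-1) choose (k-1)) * (q*q)^(k-1) * (1 - (q*q)^(k-1))^(k-1))"
    by (rule mult_mono[OF tail]) (use square_power_in_unit[OF q, of k] k m in auto)
  moreover have "real n * (q*q) / (4*m) = real n / (2*m) * (q*q) * (1/2)" by simp
  ultimately show ?thesis
    unfolding private_prob_diag[OF k(1)] m_def[symmetric] by (simp only: power_mult_distrib mult_ac)
qed

lemma private_mass_at_top:
  assumes k: "2 \<le> k"
    and roots: "\<forall>\<^sub>F n in sequentially. 0 < Q n \<and> Q n < 1 \<and> interaction_foc n k (Q n) = 0"
  shows "filterlim (\<lambda>n. real ((n-1) choose (k-1)) * private_prob n k (Q n) (Q n)) at_top sequentially"
proof -
  define m where "m = real (k-1)"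
  have m: "0 < m" using k unfolding m_def by simp
  have "filterlim (\<lambda>n. real n * (Q n * Q n) * (1 / (4*m))) at_top sequentially"
    by (rule filterlim_at_top_mult_tendsto_pos[OF tendsto_const _ foc_roots_link_mass_at_top[OF k roots]])
      (use m in simp)
  then have pow: "filterlim (\<lambda>n. (real n * (Q n * Q n) / (4*m))^(k-1)) at_top sequentially"
    using k by (intro filterlim_pow_at_top) simp_all
  have lower: "filterlim (\<lambda>n. exp (- 4*m) * (real n * (Q n * Q n) / (4*m))^(k-1)) at_top sequentially"
    by (rule filterlim_tendsto_pos_mult_at_top[OF tendsto_const _ pow]) simp
  have "\<forall>\<^sub>F n in sequentially. (Q n * Q n)^k < 1/2"
    using order_tendstoD(2)[OF foc_roots_asymptotics(1)[OF k roots], of "1/2"] by simp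
  moreover have "\<forall>\<^sub>F n in sequentially. real n * (Q n * Q n)^k < 2 * m"
    using order_tendstoD(2)[OF foc_roots_asymptotics(2)[OF k roots], of "2*m"] m unfolding m_def by simp
  ultimately have "\<forall>\<^sub>F n in sequentially. exp (- 4*m) * (real n * (Q n * Q n) / (4*m))^(k-1)
      \<le> real ((n-1) choose (k-1)) * private_prob n k (Q n) (Q n)"
    using roots eventually_gt_at_top[of k]
  proof eventually_elim
    case (elim n)
    then show ?case
      using private_mass_lower_bound[OF k, of n "Q n"] unfolding m_def by simp
  qed
  then show ?thesis by (rule filterlim_at_top_mono[OF lower])
qed

lemma sym_inv_eq_of_foc_root:
  assumes k: "2 \<le> k" "k \<le> n" and q: "0 < q" "q < 1" "interaction_foc n k q = 0"
    and p: "0 < p" "p < 1"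
    and best: "\<And>a. 0 \<le> a \<Longrightarrow> a < 1 \<Longrightarrow>
      a * p^(k-1) * M - c a \<le> p * p^(k-1) * M - c p"
    and M: "M = real ((n-1) choose (k-1)) * private_prob n k q q"
  shows "sym_inv_eq k 0 c n p q"
proof -
  have n: "0 < n" using k by simp
  have "real ((n-1) choose (k-1)) * (a * p^(k-1)) * private_prob n k q b - c a
      \<le> real ((n-1) choose (k-1)) * (p * p^(k-1)) * private_prob n k q q - c p"
    if "admissible a b" for a b
  proof -
    have a: "0 \<le> a" "a < 1" and b: "0 \<le> b" "b \<le> 1" using that unfolding admissible_def by auto
    have "real ((n-1) choose (k-1)) * (a * p^(k-1)) * private_prob n k q b \<le> a * p^(k-1) * M"
      unfolding M using private_prob_le_at_foc_root[OF k(1) q b] a p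
      by (simp add: mult_left_mono mult.assoc mult.left_commute)
    then show ?thesis using best[OF a] unfolding M by (simp add: mult_ac)
  qed
  then show ?thesis
    unfolding sym_inv_eq_delta0_iff[OF k(1) n] using p q by (simp add: admissible_def)
qed

lemma eventually_sym_inv_eq_exists:
  assumes k: "2 \<le> k" and c: "cost_ok c"
  shows "\<forall>\<^sub>F n in sequentially. \<exists>ps qs. sym_inv_eq k 0 c n ps qs"
proof -
  define Q where "Q n = (SOME q. 0 < q \<and> q < 1 \<and> interaction_foc n k q = 0)" for n
  have roots: "0 < Q n \<and> Q n < 1 \<and> interaction_foc n k (Q n) = 0" for n
    unfolding Q_def by (rule someI_ex[OF foc_root_exists[OF k]])
  obtain B where B: "\<And>M. B \<le> M \<Longrightarrow> \<exists>p. 0 < p \<and> p < 1 \<and>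
      (\<forall>a. 0 \<le> a \<and> a < 1 \<longrightarrow> a * p^(k-1) * M - c a \<le> p * p^(k-1) * M - c p)"
    using cost_ok_best_response[OF c] by blast
  have "\<forall>\<^sub>F n in sequentially. B \<le> real ((n-1) choose (k-1)) * private_prob n k (Q n) (Q n)"
    using private_mass_at_top[OF k always_eventually[OF allI[OF roots]]]
    unfolding filterlim_at_top by blast
  then show ?thesis
    using eventually_ge_at_top[of k]
  proof eventually_elim
    case (elim n)
    then obtain p where "0 < p" "p < 1" and "\<forall>a. 0 \<le> a \<and> a < 1 \<longrightarrow>
        a * p^(k-1) * (real ((n-1) choose (k-1)) * private_prob n k (Q n) (Q n)) - c a
          \<le> p * p^(k-1) * (real ((n-1) choose (k-1)) * private_prob n k (Q n) (Q n)) - c p"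
      using B by blast
    with elim roots[of n] have "sym_inv_eq k 0 c n p (Q n)"
      by (intro sym_inv_eq_of_foc_root[OF k]) auto
    then show ?case by blast
  qed
qed

theorem propositionC1:
  fixes k :: nat and c :: "real \<Rightarrow> real"
  assumes "k \<ge> 2" and "cost_ok c"
  shows "(\<forall>\<^sub>F n in sequentially. \<exists>ps qs. sym_inv_eq k 0 c n ps qs) \<and>
         (\<forall>P Q :: nat \<Rightarrow> real.
            (\<forall>\<^sub>F n in sequentially. sym_inv_eq k 0 c n (P n) (Q n)) \<longrightarrow>
            ((\<lambda>n. iota (Q n) (Q n) * real n powr (1 / real k))
               \<longlonglongrightarrow> real (k - 1) powr (1 / real k)))"
proof (intro conjI allI impI)
  show "\<forall>\<^sub>F n in sequentially. \<exists>ps qs. sym_inv_eq k 0 c n ps qs"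
    using eventually_sym_inv_eq_exists[OF assms] .
next
  fix P Q :: "nat \<Rightarrow> real"
  assume "\<forall>\<^sub>F n in sequentially. sym_inv_eq k 0 c n (P n) (Q n)"
  then have "\<forall>\<^sub>F n in sequentially. 0 < Q n \<and> Q n < 1 \<and> interaction_foc n k (Q n) = 0"
    using eventually_ge_at_top[of k]
    by eventually_elim (use sym_inv_eq_imp_foc_root assms in blast)
  from foc_roots_scaling_limit[OF assms(1) this]
  show "(\<lambda>n. iota (Q n) (Q n) * real n powr (1 / real k)) \<longlonglongrightarrow> real (k - 1) powr (1 / real k)"
    unfolding iota_def .
qed

end
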